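(* Let $P$ be a reversible ergodic Markov chain on a finite set $X$ with stationary distribution $\pi$, let $S,M\subseteq X$ be disjoint and nonempty, $\sigma=\pi|_S$, and $q=(q_S,q_M)\in[0,1)^2$. Let $(Y_i(q))_{i\ge0}$ be the Markov chain with transition matrix $P(q)$ and $Y_0(q)\sim\sigma$, and let $D(q)$ be the discriminant matrix of $P(q)$. Then for all $t,t'\in\mathbb N$ with $t'>t$, \[ \big\|\Pi_M D(q)^t|\sqrt\sigma\rangle\big\|\ \ge\ \Pr\big(Y_t(q)\in M,\ Y_{t'}(q)\in S\big). \]
   Context: $(\pi|_S)_u=\pi_u/\pi(S)$ for $u\in S$ and $0$ otherwise; $|\sqrt\sigma\rangle=\sum_u\sqrt{\sigma_u}|u\rangle$. The interpolated chain is $P(q)_{u,v}=(1-q_S)P_{u,v}+q_S\delta_{uv}$ if $u\in S$, $(1-q_M)P_{u,v}+q_M\delta_{uv}$ if $u\in M$, and $P_{u,v}$ otherwise. The discriminant matrix of a reversible chain $Q$ is $D(Q)=\sqrt{Q\circ Q^T}$ (entrywise). $\Pi_M=\sum_{u\in M}|u\rangle\langle u|$. *)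

theory Defs
  imports Complex_Main
begin

definition mmult :: "('a::finite \<Rightarrow> 'a \<Rightarrow> real) \<Rightarrow> ('a \<Rightarrow> 'a \<Rightarrow> real) \<Rightarrow> 'a \<Rightarrow> 'a \<Rightarrow> real" where
  "mmult A B u v = (\<Sum>w\<in>UNIV. A u w * B w v)"

definition mvec :: "('a::finite \<Rightarrow> 'a \<Rightarrow> real) \<Rightarrow> ('a \<Rightarrow> real) \<Rightarrow> 'a \<Rightarrow> real" where
  "mvec A x u = (\<Sum>w\<in>UNIV. A u w * x w)"

fun mpow :: "('a::finite \<Rightarrow> 'a \<Rightarrow> real) \<Rightarrow> nat \<Rightarrow> 'a \<Rightarrow> 'a \<Rightarrow> real" where
  "mpow A 0 = (\<lambda>u v. if u = v then 1 else 0)"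
| "mpow A (Suc n) = mmult (mpow A n) A"

definition stochastic :: "('a::finite \<Rightarrow> 'a \<Rightarrow> real) \<Rightarrow> bool" where
  "stochastic P \<longleftrightarrow> (\<forall>u v. 0 \<le> P u v) \<and> (\<forall>u. (\<Sum>v\<in>UNIV. P u v) = 1)"

definition irreducible_chain :: "('a::finite \<Rightarrow> 'a \<Rightarrow> real) \<Rightarrow> bool" where
  "irreducible_chain P \<longleftrightarrow> (\<forall>u v. \<exists>n>0. mpow P n u v > 0)"

definition aperiodic_chain :: "('a::finite \<Rightarrow> 'a \<Rightarrow> real) \<Rightarrow> bool" where
  "aperiodic_chain P \<longleftrightarrow> (\<forall>u. Gcd {n. n > 0 \<and> mpow P n u u > 0} = 1)"

definition ergodic_chain :: "('a::finite \<Rightarrow> 'a \<Rightarrow> real) \<Rightarrow> bool" where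
  "ergodic_chain P \<longleftrightarrow> stochastic P \<and> irreducible_chain P \<and> aperiodic_chain P"

definition stationary_dist :: "('a::finite \<Rightarrow> 'a \<Rightarrow> real) \<Rightarrow> ('a \<Rightarrow> real) \<Rightarrow> bool" where
  "stationary_dist P \<mu> \<longleftrightarrow> (\<forall>u. 0 \<le> \<mu> u) \<and> (\<Sum>u\<in>UNIV. \<mu> u) = 1
     \<and> (\<forall>v. (\<Sum>u\<in>UNIV. \<mu> u * P u v) = \<mu> v)"

definition reversible_wrt :: "('a::finite \<Rightarrow> 'a \<Rightarrow> real) \<Rightarrow> ('a \<Rightarrow> real) \<Rightarrow> bool" where
  "reversible_wrt P \<mu> \<longleftrightarrow> (\<forall>u v. \<mu> u * P u v = \<mu> v * P v u)"

definition restrict_dist :: "('a::finite \<Rightarrow> real) \<Rightarrow> 'a set \<Rightarrow> 'a \<Rightarrow> real" where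
  "restrict_dist \<mu> S u = (if u \<in> S then \<mu> u / (\<Sum>w\<in>S. \<mu> w) else 0)"

definition interp_chain :: "('a::finite \<Rightarrow> 'a \<Rightarrow> real) \<Rightarrow> 'a set \<Rightarrow> 'a set \<Rightarrow> real \<Rightarrow> real \<Rightarrow> 'a \<Rightarrow> 'a \<Rightarrow> real" where
  "interp_chain P S M qS qM u v =
     (if u \<in> S then (1 - qS) * P u v + qS * (if u = v then 1 else 0)
      else if u \<in> M then (1 - qM) * P u v + qM * (if u = v then 1 else 0)
      else P u v)"

definition discriminant :: "('a::finite \<Rightarrow> 'a \<Rightarrow> real) \<Rightarrow> 'a \<Rightarrow> 'a \<Rightarrow> real" where
  "discriminant Q u v = sqrt (Q u v * Q v u)"

definition sqrt_vec :: "('a::finite \<Rightarrow> real) \<Rightarrow> 'a \<Rightarrow> real" where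
  "sqrt_vec s u = sqrt (s u)"

definition proj_norm :: "'a set \<Rightarrow> ('a::finite \<Rightarrow> real) \<Rightarrow> real" where
  "proj_norm M x = sqrt (\<Sum>u\<in>M. (x u)^2)"

text \<open>Pr(Y_t in A, Y_t' in B) for the Markov chain with transition matrix Q and
  initial law mu, t < t' (finite-dimensional distribution of the chain).\<close>
definition chain_prob2 :: "('a::finite \<Rightarrow> 'a \<Rightarrow> real) \<Rightarrow> ('a \<Rightarrow> real) \<Rightarrow> nat \<Rightarrow> 'a set \<Rightarrow> nat \<Rightarrow> 'a set \<Rightarrow> real" where
  "chain_prob2 Q mu t A t' B =
     (\<Sum>u\<in>UNIV. \<Sum>v\<in>A. \<Sum>w\<in>B. mu u * mpow Q t u v * mpow Q (t' - t) v w)"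

end

theory Submission
  imports Defs "HOL-Analysis.L2_Norm"
begin

text \<open>
  A chain Q that is reversible with respect to positive weights w has discriminant
  D(Q) = W^(1/2) Q W^(-1/2), where W = diag w. Hence, for \<sigma> = w|_S, the vector D(Q)^t sqrt \<sigma>
  equals sqrt (w(S)) W^(-1/2) p, where p is the law of Y_t. The probability
  Pr(Y_t \<in> M, Y_t' \<in> S) is the sum over v \<in> M of p_v h_v, where h_v \<in> [0,1] is the probability
  of being in S after t' - t steps from v. Cauchy-Schwarz bounds it by the norm of \<Pi>_M W^(-1/2) p
  times (\<Sum>_v w_v h_v^2)^(1/2), and by reversibility \<Sum>_v w_v h_v = w(S).
  The interpolated chain P(q) is reversible with respect to \<pi>_u / (1 - q_u), a multiple of \<pi> on S,
  whose restriction to S is therefore \<pi>|_S.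
\<close>

lemma mmult_assoc: "mmult (mmult A B) C = mmult A (mmult B C)"
proof (intro ext)
  fix u v
  have "mmult (mmult A B) C u v = (\<Sum>y\<in>UNIV. \<Sum>x\<in>UNIV. A u x * B x y * C y v)"
    unfolding mmult_def by (simp add: sum_distrib_right)
  also have "\<dots> = (\<Sum>x\<in>UNIV. \<Sum>y\<in>UNIV. A u x * B x y * C y v)"
    by (rule sum.swap)
  also have "\<dots> = mmult A (mmult B C) u v"
    unfolding mmult_def by (simp add: sum_distrib_left mult.assoc)
  finally show "mmult (mmult A B) C u v = mmult A (mmult B C) u v" .
qed

lemma mmult_id_left: "mmult (\<lambda>u v. if u = v then 1 else 0) A = A"
  unfolding mmult_def by (intro ext) (simp add: if_distrib[of "\<lambda>c. c * _"] cong: if_cong)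

lemma mmult_id_right: "mmult A (\<lambda>u v. if u = v then 1 else 0) = A"
  unfolding mmult_def by (intro ext) (simp add: if_distrib cong: if_cong)

lemma mpow_Suc_left: "mpow A (Suc n) = mmult A (mpow A n)"
proof (induction n)
  case 0
  then show ?case by (simp add: mmult_id_left mmult_id_right)
next
  case (Suc n)
  then show ?case by (simp add: mmult_assoc)
qed

lemma mpow_nonneg: "(\<And>u v. 0 \<le> A u v) \<Longrightarrow> 0 \<le> mpow A n u v"
  by (induction n arbitrary: u v) (auto simp: mmult_def intro!: sum_nonneg)

lemma mpow_row_sum:
  assumes "\<And>u. (\<Sum>v\<in>UNIV. A u v) = 1"
  shows "(\<Sum>v\<in>UNIV. mpow A n u v) = 1"
proof (induction n arbitrary: u)
  case (Suc n)
  have "(\<Sum>v\<in>UNIV. mpow A (Suc n) u v)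
          = (\<Sum>x\<in>UNIV. \<Sum>v\<in>UNIV. mpow A n u x * A x v)"
    unfolding mpow.simps mmult_def by (rule sum.swap)
  also have "\<dots> = 1"
    using assms Suc by (simp flip: sum_distrib_left)
  finally show ?case .
qed simp

lemma mpow_stationary:
  assumes "\<And>v. (\<Sum>u\<in>UNIV. \<mu> u * A u v) = \<mu> v"
  shows "(\<Sum>u\<in>UNIV. \<mu> u * mpow A n u v) = \<mu> v"
proof (induction n arbitrary: v)
  case (Suc n)
  have "(\<Sum>u\<in>UNIV. \<mu> u * mpow A (Suc n) u v)
          = (\<Sum>x\<in>UNIV. \<Sum>u\<in>UNIV. \<mu> u * mpow A n u x * A x v)"
    unfolding mpow.simps mmult_def sum_distrib_left mult.assoc by (rule sum.swap)
  also have "\<dots> = \<mu> v"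
    using assms Suc by (simp flip: sum_distrib_right)
  finally show ?case .
qed (simp add: if_distrib cong: if_cong)

lemma mpow_reversible:
  assumes "reversible_wrt A w"
  shows "w u * mpow A n u v = w v * mpow A n v u"
proof (induction n arbitrary: u v)
  case (Suc n)
  have balance: "w x * A x v = w v * A v x" for x
    using assms by (simp add: reversible_wrt_def)
  have "w u * mpow A (Suc n) u v = (\<Sum>x\<in>UNIV. (w u * mpow A n u x) * A x v)"
    by (simp add: mmult_def sum_distrib_left mult.assoc)
  also have "\<dots> = (\<Sum>x\<in>UNIV. mpow A n x u * (w x * A x v))"
    using Suc by (simp add: mult_ac)
  also have "\<dots> = w v * mmult A (mpow A n) v u"
    by (simp add: balance mmult_def sum_distrib_left mult_ac)
  also have "\<dots> = w v * mpow A (Suc n) v u"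
    by (simp only: mpow_Suc_left)
  finally show ?case .
qed simp

lemma mpow_similar:
  assumes "\<And>u. f u \<noteq> 0" and "\<And>u v. B u v = f u * A u v / f v"
  shows "mpow B n u v = f u * mpow A n u v / f v"
proof (induction n arbitrary: u v)
  case 0
  then show ?case using assms(1)[of u] by (cases "u = v") simp_all
next
  case (Suc n)
  have "mpow B (Suc n) u v = (\<Sum>x\<in>UNIV. f u * (mpow A n u x * A x v) / f v)"
    unfolding mpow.simps mmult_def Suc.IH assms(2)
    using assms(1) by (intro sum.cong) (simp_all add: field_simps)
  also have "\<dots> = f u * mpow A (Suc n) u v / f v"
    by (simp add: mmult_def sum_distrib_left sum_divide_distrib)
  finally show ?case .
qed

lemma stationary_dist_pos:
  assumes "stationary_dist P \<mu>" and "\<And>u v. 0 \<le> P u v" and "irreducible_chain P"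
  shows "0 < \<mu> v"
proof -
  have nonneg: "0 \<le> \<mu> u" for u
    using assms(1) by (simp add: stationary_dist_def)
  have "(\<Sum>u\<in>UNIV. \<mu> u) = 1"
    using assms(1) by (simp add: stationary_dist_def)
  then obtain u where "\<mu> u \<noteq> 0"
    by (metis sum.neutral zero_neq_one)
  then have "0 < \<mu> u"
    using nonneg[of u] by simp
  moreover obtain n where "0 < mpow P n u v"
    using assms(3) by (auto simp: irreducible_chain_def)
  ultimately have "0 < \<mu> u * mpow P n u v"
    by simp
  also have "\<dots> \<le> (\<Sum>x\<in>UNIV. \<mu> x * mpow P n x v)"
    by (rule member_le_sum) (auto intro: mult_nonneg_nonneg nonneg mpow_nonneg assms(2))
  also have "\<dots> = \<mu> v"
    using assms(1) by (intro mpow_stationary) (simp add: stationary_dist_def)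
  finally show ?thesis .
qed

definition lazy_chain :: "('a::finite \<Rightarrow> 'a \<Rightarrow> real) \<Rightarrow> ('a \<Rightarrow> real) \<Rightarrow> 'a \<Rightarrow> 'a \<Rightarrow> real" where
  "lazy_chain P q u v = (1 - q u) * P u v + q u * (if u = v then 1 else 0)"

lemma interp_chain_eq_lazy_chain:
  "interp_chain P S M qS qM = lazy_chain P (\<lambda>u. if u \<in> S then qS else if u \<in> M then qM else 0)"
  by (intro ext) (simp add: interp_chain_def lazy_chain_def)

lemma stochastic_lazy_chain:
  assumes "stochastic P" and "\<And>u. 0 \<le> q u" and "\<And>u. q u \<le> 1"
  shows "stochastic (lazy_chain P q)"
  unfolding stochastic_def
proof (intro conjI allI)
  fix u v
  show "0 \<le> lazy_chain P q u v"
    using assms by (simp add: lazy_chain_def stochastic_def)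
  have "(\<Sum>v\<in>UNIV. lazy_chain P q u v)
          = (1 - q u) * (\<Sum>v\<in>UNIV. P u v) + (\<Sum>v\<in>UNIV. if u = v then q u else 0)"
    by (simp add: lazy_chain_def sum.distrib sum_distrib_left if_distrib[of "\<lambda>c. _ * c"]
             cong: if_cong)
  also have "\<dots> = 1"
    using assms(1) by (simp add: stochastic_def)
  finally show "(\<Sum>v\<in>UNIV. lazy_chain P q u v) = 1" .
qed

lemma reversible_lazy_chain:
  assumes "reversible_wrt P \<mu>" and "\<And>u. q u \<noteq> 1"
  shows "reversible_wrt (lazy_chain P q) (\<lambda>u. \<mu> u / (1 - q u))"
  using assms by (auto simp: reversible_wrt_def lazy_chain_def)

lemma discriminant_reversible:
  assumes "reversible_wrt Q w" and "\<And>u. 0 < w u" and "\<And>u v. 0 \<le> Q u v"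
  shows "discriminant Q u v = sqrt (w u) * Q u v / sqrt (w v)"
proof -
  have "Q v u = w u / w v * Q u v"
    using assms(1) assms(2)[of v] by (simp add: reversible_wrt_def field_simps)
  then have "discriminant Q u v = sqrt ((Q u v)\<^sup>2 * (w u / w v))"
    by (simp add: discriminant_def power2_eq_square mult_ac)
  also have "\<dots> = sqrt (w u) * Q u v / sqrt (w v)"
    using assms(3)[of u v] by (simp add: real_sqrt_mult real_sqrt_divide)
  finally show ?thesis .
qed

lemma mvec_mpow_discriminant:
  assumes "reversible_wrt Q w" and "\<And>u. 0 < w u" and "\<And>u v. 0 \<le> Q u v"
  shows "mvec (mpow (discriminant Q) n) x v
           = (\<Sum>u\<in>UNIV. sqrt (w u) * x u * mpow Q n u v) / sqrt (w v)"
proof -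
  have sqrt_w_nonzero: "sqrt (w u) \<noteq> 0" for u
    using assms(2)[of u] by simp
  have "mpow (discriminant Q) n v u = sqrt (w u) * mpow Q n u v / sqrt (w v)" for u
  proof -
    have "mpow (discriminant Q) n v u = sqrt (w v) * mpow Q n v u / sqrt (w u)"
      using sqrt_w_nonzero discriminant_reversible[OF assms] by (rule mpow_similar)
    also have "\<dots> = sqrt (w u) * mpow Q n u v / sqrt (w v)"
      using mpow_reversible[OF assms(1), of v n u] assms(2)[of u] assms(2)[of v]
      by (simp add: field_simps) (simp flip: mult.assoc)
    finally show ?thesis .
  qed
  then show ?thesis
    by (simp add: mvec_def sum_divide_distrib mult_ac)
qed

lemma restrict_dist_scaled:
  assumes "\<And>u. u \<in> S \<Longrightarrow> w u = k * \<mu> u" and "k \<noteq> 0"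
  shows "restrict_dist w S = restrict_dist \<mu> S"
proof (intro ext)
  fix u
  have "(\<Sum>x\<in>S. w x) = k * (\<Sum>x\<in>S. \<mu> x)"
    using assms(1) by (simp add: sum_distrib_left)
  then show "restrict_dist w S u = restrict_dist \<mu> S u"
    using assms by (simp add: restrict_dist_def)
qed

lemma sqrt_mult_sqrt_restrict_dist:
  fixes w :: "'a::finite \<Rightarrow> real"
  assumes "\<And>u. 0 \<le> w u"
  shows "sqrt (w u) * sqrt (restrict_dist w S u) = sqrt (\<Sum>x\<in>S. w x) * restrict_dist w S u"
proof (cases "u \<in> S")
  case True
  have "0 \<le> (\<Sum>x\<in>S. w x)"
    using assms by (simp add: sum_nonneg)
  moreover have "sqrt (w u * w u) = w u"
    using assms by simp
  ultimately show ?thesis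
    using True by (cases "(\<Sum>x\<in>S. w x) = 0")
      (simp_all add: restrict_dist_def real_sqrt_divide field_simps flip: real_sqrt_mult)
qed (simp add: restrict_dist_def)

lemma reversible_weighted_hitting_le:
  assumes "stochastic Q" and "reversible_wrt Q w" and "\<And>u. 0 \<le> w u"
  shows "(\<Sum>v\<in>M. w v * (\<Sum>x\<in>S. mpow Q n v x)\<^sup>2) \<le> (\<Sum>x\<in>S. w x)"
proof -
  define h where "h v = (\<Sum>x\<in>S. mpow Q n v x)" for v
  have Q_nonneg: "0 \<le> mpow Q n u v" for u v
    using assms(1) by (intro mpow_nonneg) (simp add: stochastic_def)
  have Q_rows: "(\<Sum>v\<in>UNIV. mpow Q n u v) = 1" for u
    using assms(1) by (intro mpow_row_sum) (simp add: stochastic_def)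
  have h_nonneg: "0 \<le> h v" for v
    unfolding h_def by (intro sum_nonneg Q_nonneg)
  have h_le_1: "h v \<le> 1" for v
    unfolding h_def using Q_rows[of v] by (metis Q_nonneg subset_UNIV sum_mono2 finite_UNIV)
  have "(\<Sum>v\<in>M. w v * (h v)\<^sup>2) \<le> (\<Sum>v\<in>M. w v * h v)"
    using assms(3) h_nonneg h_le_1
    by (intro sum_mono mult_left_mono) (simp_all add: power2_eq_square mult_left_le_one_le)
  also have "\<dots> \<le> (\<Sum>v\<in>UNIV. w v * h v)"
    using assms(3) h_nonneg by (intro sum_mono2) simp_all
  also have "\<dots> = (\<Sum>x\<in>S. \<Sum>v\<in>UNIV. w v * mpow Q n v x)"
    unfolding h_def sum_distrib_left by (rule sum.swap)
  also have "\<dots> = (\<Sum>x\<in>S. \<Sum>v\<in>UNIV. w x * mpow Q n x v)"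
    by (intro sum.cong refl) (rule mpow_reversible[OF assms(2)])
  also have "\<dots> = (\<Sum>x\<in>S. w x)"
    by (simp add: Q_rows flip: sum_distrib_left)
  finally show ?thesis
    by (simp add: h_def)
qed

lemma chain_prob2_le_proj_norm_discriminant:
  assumes "stochastic Q" and "reversible_wrt Q w" and "\<And>u. 0 < w u"
  shows "chain_prob2 Q (restrict_dist w S) t M t' S
           \<le> proj_norm M (mvec (mpow (discriminant Q) t) (sqrt_vec (restrict_dist w S)))"
proof -
  define \<sigma> where "\<sigma> = restrict_dist w S"
  define c where "c = sqrt (\<Sum>x\<in>S. w x)"
  define p where "p v = (\<Sum>u\<in>UNIV. \<sigma> u * mpow Q t u v)" for v
  define h where "h v = (\<Sum>x\<in>S. mpow Q (t' - t) v x)" for v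
  have w_nonneg: "0 \<le> w u" for u
    using assms(3) less_imp_le by blast
  have Q_nonneg: "0 \<le> Q u v" for u v
    using assms(1) by (simp add: stochastic_def)
  have discriminant_vector: "mvec (mpow (discriminant Q) t) (sqrt_vec \<sigma>) v = c * (p v / sqrt (w v))" for v
  proof -
    have "mvec (mpow (discriminant Q) t) (sqrt_vec \<sigma>) v
            = (\<Sum>u\<in>UNIV. c * \<sigma> u * mpow Q t u v) / sqrt (w v)"
      unfolding mvec_mpow_discriminant[OF assms(2,3) Q_nonneg] sqrt_vec_def \<sigma>_def c_def
      by (simp only: sqrt_mult_sqrt_restrict_dist[of w, OF w_nonneg])
    then show ?thesis
      by (simp add: p_def sum_distrib_left mult.assoc)
  qed
  have "chain_prob2 Q \<sigma> t M t' S = (\<Sum>u\<in>UNIV. \<Sum>v\<in>M. \<sigma> u * mpow Q t u v * h v)"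
    by (simp add: chain_prob2_def h_def sum_distrib_left)
  also have "\<dots> = (\<Sum>v\<in>M. p v * h v)"
    unfolding p_def sum_distrib_right by (rule sum.swap)
  also have "\<dots> = (\<Sum>v\<in>M. (p v / sqrt (w v)) * (sqrt (w v) * h v))"
    using assms(3) by (intro sum.cong) (simp_all add: order_less_imp_not_eq2)
  also have "\<dots> \<le> (\<Sum>v\<in>M. \<bar>p v / sqrt (w v)\<bar> * \<bar>sqrt (w v) * h v\<bar>)"
    by (intro sum_mono) (simp only: abs_ge_self flip: abs_mult)
  also have "\<dots> \<le> L2_set (\<lambda>v. p v / sqrt (w v)) M * L2_set (\<lambda>v. sqrt (w v) * h v) M"
    by (rule L2_set_mult_ineq)
  also have "\<dots> \<le> L2_set (\<lambda>v. p v / sqrt (w v)) M * c"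
  proof (intro mult_left_mono L2_set_nonneg)
    have "(\<Sum>v\<in>M. (sqrt (w v) * h v)\<^sup>2) \<le> (\<Sum>x\<in>S. w x)"
      using reversible_weighted_hitting_le[OF assms(1,2) w_nonneg]
      by (simp add: power_mult_distrib w_nonneg h_def)
    then show "L2_set (\<lambda>v. sqrt (w v) * h v) M \<le> c"
      unfolding L2_set_def c_def by (rule real_sqrt_le_mono)
  qed
  also have "\<dots> = c * L2_set (\<lambda>v. p v / sqrt (w v)) M"
    by (rule mult.commute)
  also have "\<dots> = L2_set (\<lambda>v. c * (p v / sqrt (w v))) M"
    by (rule L2_set_right_distrib) (simp add: c_def sum_nonneg w_nonneg)
  also have "\<dots> = proj_norm M (mvec (mpow (discriminant Q) t) (sqrt_vec \<sigma>))"
    by (simp only: discriminant_vector proj_norm_def L2_set_def)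
  finally show ?thesis
    by (simp only: \<sigma>_def)
qed

theorem mainTheorem11:
  fixes P :: "'a::finite \<Rightarrow> 'a \<Rightarrow> real" and \<pi>\<^sub>0 :: "'a \<Rightarrow> real"
    and S M :: "'a set" and qS qM :: real and t t' :: nat
  assumes "ergodic_chain P"
    and "stationary_dist P \<pi>\<^sub>0"
    and "reversible_wrt P \<pi>\<^sub>0"
    and "S \<inter> M = {}" and "S \<noteq> {}" and "M \<noteq> {}"
    and "0 \<le> qS" and "qS < 1" and "0 \<le> qM" and "qM < 1"
    and "t < t'"
  shows "proj_norm M (mvec (mpow (discriminant (interp_chain P S M qS qM)) t)
                          (sqrt_vec (restrict_dist \<pi>\<^sub>0 S)))
         \<ge> chain_prob2 (interp_chain P S M qS qM) (restrict_dist \<pi>\<^sub>0 S) t M t' S"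
proof -
  define q where "q u = (if u \<in> S then qS else if u \<in> M then qM else 0)" for u
  define w where "w u = \<pi>\<^sub>0 u / (1 - q u)" for u
  have q_bounds: "0 \<le> q u" "q u < 1" for u
    using assms(7-10) by (simp_all add: q_def)
  then have q_ne_1: "q u \<noteq> 1" for u
    by (metis less_irrefl)
  have P_stochastic: "stochastic P" and "irreducible_chain P"
    using assms(1) by (simp_all add: ergodic_chain_def)
  then have "0 < \<pi>\<^sub>0 u" for u
    using assms(2) by (intro stationary_dist_pos) (simp_all add: stochastic_def)
  then have w_pos: "0 < w u" for u
    using q_bounds by (simp add: w_def)
  have chain: "interp_chain P S M qS qM = lazy_chain P q"
    by (simp add: interp_chain_eq_lazy_chain q_def[abs_def])
  have "stochastic (lazy_chain P q)"
    using P_stochastic q_bounds by (intro stochastic_lazy_chain) (simp_all add: less_imp_le)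
  moreover have "reversible_wrt (lazy_chain P q) w"
    unfolding w_def[abs_def] using assms(3) q_ne_1 by (rule reversible_lazy_chain)
  ultimately have "chain_prob2 (lazy_chain P q) (restrict_dist w S) t M t' S
      \<le> proj_norm M (mvec (mpow (discriminant (lazy_chain P q)) t)
                          (sqrt_vec (restrict_dist w S)))"
    using w_pos by (rule chain_prob2_le_proj_norm_discriminant)
  moreover have "restrict_dist w S = restrict_dist \<pi>\<^sub>0 S"
    using assms(8)
    by (intro restrict_dist_scaled[where k = "1 / (1 - qS)"]) (simp_all add: w_def q_def)
  ultimately show ?thesis
    by (simp only: chain)
qed

end
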